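(* In the model described in the context with $b=0$, the outcome consisting of the Mussa–Rosen mechanism $(q^{MR},t^{MR})$ together with the distribution $G=F_0$ (full revelation of $\theta$) is a solution to the monopolist's problem.
   Context: A monopolist sells goods of quality $q\in[0,\bar q]$ (for some fixed $\bar q>0$) to a buyer. The buyer's value $\theta\in[0,1]$ is drawn from a CDF $F_0$ with density $f_0>0$ on $[0,1]$; $F_0$ has increasing hazard rate. Neither the monopolist nor the buyer knows $\theta$. The cost of quality $q$ is $c(q)$, where $c:\mathbb{R}_+\to\mathbb{R}_+$ is strictly increasing, continuously differentiable and strictly convex. A menu is a set of items $(q,t)\in[0,\bar q]\times\mathbb{R}_+$ containing $(0,0)$. The buyer's utility from $(q,t)$ is $\theta q-t$; an intermediary with commonly known bias $b\ge0$ has utility $(\theta+b)q-t$. Timing: the monopolist posts a menu; the intermediary commits to a signal about $\theta$; the buyer observes the realization and chooses an item. Payoffs depend only on the posterior mean $w=\mathbb{E}[\theta\mid s]$; a signal is identified with the CDF $G$ of $w$, and feasible $G$ form $MPC(F_0)=\{G \text{ CDF on }[0,1]: \int_0^x (F_0-G)\ge 0\ \forall x,\ \text{equality at }x=1\}$. Indifferences of the buyer are broken toward higher quality and toward participation. A mechanism is $q:[0,1]\to[0,\bar q]$, $t:[0,1]\to\mathbb{R}_+$. The monopolist's problem: maximize $\int_0^1[t(w)-c(q(w))]\,dG(w)$ over $(q,t)$ and $G\in MPC(F_0)$ subject to (B-IC) $wq(w)-t(w)\ge wq(w')-t(w')$ for all $w,w'$; (B-IR) $wq(w)-t(w)\ge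 0$ for all $w$; (I-OB) $G\in\arg\max_{H\in MPC(F_0)}\int[(w+b)q(w)-t(w)]\,dH(w)$. The Mussa–Rosen mechanism $(q^{MR},t^{MR})$ is the optimal mechanism in the standard screening problem in which the buyer privately knows $\theta\sim F_0$, i.e. it maximizes $\int_0^1[t(\theta)-c(q(\theta))]\,dF_0(\theta)$ subject to (B-IC) and (B-IR) with $w$ replaced by $\theta$. *)

theory Defs
  imports "HOL-Analysis.Analysis"
begin

definition is_cdf01 :: "(real \<Rightarrow> real) \<Rightarrow> bool" where
  "is_cdf01 G \<longleftrightarrow> mono G \<and> (\<forall>x. continuous (at_right x) G)
     \<and> (\<forall>x<0. G x = 0) \<and> (\<forall>x\<ge>1. G x = 1)"

definition MPC :: "(real \<Rightarrow> real) \<Rightarrow> (real \<Rightarrow> real) set" where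
  "MPC F0 = {G. is_cdf01 G
      \<and> (\<forall>x\<in>{0..1}. integral {0..x} (\<lambda>s. F0 s - G s) \<ge> 0)
      \<and> integral {0..1} (\<lambda>s. F0 s - G s) = 0}"

definition expect :: "(real \<Rightarrow> real) \<Rightarrow> (real \<Rightarrow> real) \<Rightarrow> real" where
  "expect G f = set_lebesgue_integral (interval_measure G) {0..1} f"

definition strictly_convex_on :: "real set \<Rightarrow> (real \<Rightarrow> real) \<Rightarrow> bool" where
  "strictly_convex_on S c \<longleftrightarrow> (\<forall>x\<in>S. \<forall>y\<in>S. \<forall>u. x \<noteq> y \<and> 0 < u \<and> u < 1 \<longrightarrow>
      c (u * x + (1 - u) * y) < u * c x + (1 - u) * c y)"

definition mechanism :: "real \<Rightarrow> (real \<Rightarrow> real) \<Rightarrow> (real \<Rightarrow> real) \<Rightarrow> bool" where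
  "mechanism qbar q t \<longleftrightarrow> (\<forall>w\<in>{0..1}. 0 \<le> q w \<and> q w \<le> qbar \<and> 0 \<le> t w)"

definition B_IC :: "(real \<Rightarrow> real) \<Rightarrow> (real \<Rightarrow> real) \<Rightarrow> bool" where
  "B_IC q t \<longleftrightarrow> (\<forall>w\<in>{0..1}. \<forall>w'\<in>{0..1}. w * q w - t w \<ge> w * q w' - t w')"

definition B_IR :: "(real \<Rightarrow> real) \<Rightarrow> (real \<Rightarrow> real) \<Rightarrow> bool" where
  "B_IR q t \<longleftrightarrow> (\<forall>w\<in>{0..1}. w * q w - t w \<ge> 0)"

definition I_OB :: "(real \<Rightarrow> real) \<Rightarrow> real \<Rightarrow> (real \<Rightarrow> real) \<Rightarrow> (real \<Rightarrow> real)
    \<Rightarrow> (real \<Rightarrow> real) \<Rightarrow> bool" where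
  "I_OB F0 b q t G \<longleftrightarrow> G \<in> MPC F0 \<and>
     (\<forall>H\<in>MPC F0. expect H (\<lambda>w. (w + b) * q w - t w) \<le> expect G (\<lambda>w. (w + b) * q w - t w))"

definition monopolist_feasible :: "(real \<Rightarrow> real) \<Rightarrow> real \<Rightarrow> real \<Rightarrow> (real \<Rightarrow> real)
    \<Rightarrow> (real \<Rightarrow> real) \<Rightarrow> (real \<Rightarrow> real) \<Rightarrow> bool" where
  "monopolist_feasible F0 b qbar q t G \<longleftrightarrow>
     mechanism qbar q t \<and> G \<in> MPC F0 \<and> B_IC q t \<and> B_IR q t \<and> I_OB F0 b q t G"

definition monopolist_solution :: "(real \<Rightarrow> real) \<Rightarrow> (real \<Rightarrow> real) \<Rightarrow> real \<Rightarrow> real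
    \<Rightarrow> (real \<Rightarrow> real) \<Rightarrow> (real \<Rightarrow> real) \<Rightarrow> (real \<Rightarrow> real) \<Rightarrow> bool" where
  "monopolist_solution F0 c b qbar q t G \<longleftrightarrow>
     monopolist_feasible F0 b qbar q t G \<and>
     (\<forall>q' t' G'. monopolist_feasible F0 b qbar q' t' G' \<longrightarrow>
        expect G' (\<lambda>w. t' w - c (q' w)) \<le> expect G (\<lambda>w. t w - c (q w)))"

definition mussa_rosen :: "(real \<Rightarrow> real) \<Rightarrow> (real \<Rightarrow> real) \<Rightarrow> real
    \<Rightarrow> (real \<Rightarrow> real) \<Rightarrow> (real \<Rightarrow> real) \<Rightarrow> bool" where
  "mussa_rosen F0 c qbar q t \<longleftrightarrow>
     mechanism qbar q t \<and> B_IC q t \<and> B_IR q t \<and>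
     (\<forall>q' t'. mechanism qbar q' t' \<and> B_IC q' t' \<and> B_IR q' t' \<longrightarrow>
        expect F0 (\<lambda>\<theta>. t' \<theta> - c (q' \<theta>)) \<le> expect F0 (\<lambda>\<theta>. t \<theta> - c (q \<theta>)))"

end

theory Submission
  imports Defs "HOL-Probability.Probability"
begin

text \<open>
  With no bias the intermediary maximises the buyer's expected utility. By the envelope formula
  \<open>u(w) = u(0) + \<integral>\<^sub>0\<^sup>w q\<close>, a signal \<open>G\<close> gives the buyer \<open>-t(0) + \<integral>\<^sub>0\<^sup>1 q (1 - G)\<close>, which falls short
  of its value under full revelation by \<open>-\<integral>\<^sub>0\<^sup>1 q (F\<^sub>0 - G) \<ge> 0\<close>: \<open>q\<close> is increasing and the gap
  \<open>\<integral>\<^sub>0\<^sup>x (F\<^sub>0 - G)\<close> is nonnegative and vanishes at \<open>0\<close> and \<open>1\<close> (second mean value theorem).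
  So full revelation is obedient for the Mussa--Rosen mechanism. Conversely, obedience of a
  feasible \<open>(q, t, G)\<close> forces \<open>\<integral>\<^sub>0\<^sup>1 q (F\<^sub>0 - G) = 0\<close>, so the gap has a zero in every interval
  on which \<open>q\<close> strictly increases. At a zero of the gap \<open>G\<close> agrees with \<open>F\<^sub>0\<close>; as \<open>t\<close> and
  \<open>c \<circ> q\<close> only increase where \<open>q\<close> does, all their sublevel sets have the same probability
  under \<open>G\<close> and \<open>F\<^sub>0\<close>. Hence the profit under \<open>G\<close> equals the profit of \<open>(q, t)\<close> under full
  revelation, which the Mussa--Rosen mechanism maximises.
\<close>

text \<open>Functions monotone on \<open>[0,1]\<close> are extended constantly to all of \<open>\<real>\<close>, where they are
  monotone and hence Borel measurable.\<close>

definition extend01 :: "(real \<Rightarrow> real) \<Rightarrow> real \<Rightarrow> real" where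
  "extend01 f w = f (max 0 (min 1 w))"

lemma extend01_eq [simp]: "w \<in> {0..1} \<Longrightarrow> extend01 f w = f w"
  by (simp add: extend01_def)

lemma mono_extend01: "mono_on {0..1} f \<Longrightarrow> mono (extend01 f)"
  unfolding extend01_def by (intro monoI, erule mono_onD) auto

lemma extend01_bounds: "mono_on {0..1} f \<Longrightarrow> f 0 \<le> extend01 f w \<and> extend01 f w \<le> f 1"
  unfolding extend01_def by (auto intro: mono_onD)

lemma borel_measurable_extend01: "mono_on {0..1} f \<Longrightarrow> extend01 f \<in> borel_measurable borel"
  by (rule borel_measurable_mono[OF mono_extend01])

lemma eq_if_increments_dominated:
  fixes V g :: "real \<Rightarrow> real"
  assumes "a \<le> b" and g: "mono_on {a..b} g"
    and incr: "\<And>x y. a \<le> x \<Longrightarrow> x \<le> y \<Longrightarrow> y \<le> b \<Longrightarrow> \<bar>V y - V x\<bar> \<le> (g y - g x) * (y - x)"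
  shows "V b = V a"
proof -
  have bound: "\<bar>V b - V a\<bar> \<le> (g b - g a) * (b - a) / real n" if "n > 0" for n :: nat
  proof -
    define h where "h = (b - a) / real n"
    define x where "x k = a + real k * h" for k
    have h: "0 \<le> h" using \<open>a \<le> b\<close> unfolding h_def by simp
    have x_n: "x n = b" using \<open>n > 0\<close> unfolding x_def h_def by simp
    have x_le_b: "x k \<le> b" if "k \<le> n" for k
      using mult_right_mono[of "real k" "real n" h] that h x_n unfolding x_def by simp
    have "\<bar>V b - V a\<bar> = \<bar>\<Sum>k<n. V (x (Suc k)) - V (x k)\<bar>"
      using sum_lessThan_telescope[of "\<lambda>k. V (x k)" n] x_n by (simp add: x_def)
    also have "\<dots> \<le> (\<Sum>k<n. \<bar>V (x (Suc k)) - V (x k)\<bar>)"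
      by (rule sum_abs)
    also have "\<dots> \<le> (\<Sum>k<n. (g (x (Suc k)) - g (x k)) * h)"
    proof (rule sum_mono)
      fix k assume "k \<in> {..<n}"
      then have "a \<le> x k" "x k \<le> x (Suc k)" "x (Suc k) \<le> b"
        using h x_le_b[of "Suc k"] by (auto simp: x_def algebra_simps)
      then show "\<bar>V (x (Suc k)) - V (x k)\<bar> \<le> (g (x (Suc k)) - g (x k)) * h"
        using incr[of "x k" "x (Suc k)"] by (simp add: x_def algebra_simps)
    qed
    also have "\<dots> = (g b - g a) * h"
      using sum_lessThan_telescope[of "\<lambda>k. g (x k)" n] x_n
      by (simp add: sum_distrib_right[symmetric] x_def)
    finally show ?thesis unfolding h_def by simp
  qed
  have "(\<lambda>n. (g b - g a) * (b - a) / real n) \<longlonglongrightarrow> 0"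
    by (rule lim_const_over_n)
  then have "\<bar>V b - V a\<bar> \<le> 0"
    by (rule LIMSEQ_le_const) (use bound in \<open>auto intro!: exI[of _ 1]\<close>)
  then show ?thesis by simp
qed

lemma is_cdf01_mono: "is_cdf01 G \<Longrightarrow> x \<le> y \<Longrightarrow> G x \<le> G y"
  unfolding is_cdf01_def mono_def by blast

lemma is_cdf01_eq_0: "is_cdf01 G \<Longrightarrow> x < 0 \<Longrightarrow> G x = 0"
  unfolding is_cdf01_def by blast

lemma is_cdf01_eq_1: "is_cdf01 G \<Longrightarrow> 1 \<le> x \<Longrightarrow> G x = 1"
  unfolding is_cdf01_def by blast

lemma is_cdf01_bounds:
  assumes "is_cdf01 G"
  shows "0 \<le> G x \<and> G x \<le> 1"
proof -
  have "G (min x (-1)) \<le> G x" "G x \<le> G (max x 1)"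
    using assms by (auto intro: is_cdf01_mono)
  moreover have "G (min x (-1)) = 0" "G (max x 1) = 1"
    using is_cdf01_eq_0[OF assms] is_cdf01_eq_1[OF assms] by (simp_all add: min_less_iff_disj)
  ultimately show ?thesis by simp
qed

lemma is_cdf01_integrable: "is_cdf01 G \<Longrightarrow> G integrable_on {a..b}"
  by (rule integrable_on_mono_on) (auto simp: mono_on_def is_cdf01_mono)

lemma
  assumes "is_cdf01 G"
  shows real_distribution_cdf01: "real_distribution (interval_measure G)"
    and cdf_cdf01: "cdf (interval_measure G) = G"
proof -
  have lim_bot: "(G \<longlongrightarrow> 0) at_bot"
    by (intro tendsto_eventually)
      (auto simp: eventually_at_bot_linorder intro!: exI[of _ "-1"] is_cdf01_eq_0[OF assms])
  have lim_top: "(G \<longlongrightarrow> 1) at_top"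
    by (intro tendsto_eventually)
      (auto simp: eventually_at_top_linorder intro!: exI[of _ 1] is_cdf01_eq_1[OF assms])
  show "real_distribution (interval_measure G)" "cdf (interval_measure G) = G"
    using assms lim_bot lim_top unfolding is_cdf01_def
    by (auto intro!: real_distribution_interval_measure cdf_interval_measure simp: mono_def)
qed

lemma measure_cdf01_Iic: "is_cdf01 G \<Longrightarrow> measure (interval_measure G) {..x} = G x"
  using cdf_def2[of "interval_measure G" x] by (simp add: cdf_cdf01)

lemma measure_cdf01_Iio_0: "is_cdf01 G \<Longrightarrow> measure (interval_measure G) {..<0} = 0"
proof -
  assume G: "is_cdf01 G"
  interpret real_distribution "interval_measure G" by (rule real_distribution_cdf01[OF G])
  have "(G \<longlongrightarrow> measure (interval_measure G) {..<0}) (at_left 0)"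
    using cdf_at_left[of 0] unfolding cdf_cdf01[OF G] .
  moreover have "(G \<longlongrightarrow> 0) (at_left (0::real))"
    by (intro tendsto_eventually)
      (auto simp: eventually_at_left_field intro!: exI[of _ "-1"] is_cdf01_eq_0[OF G])
  ultimately show ?thesis by (rule tendsto_unique[rotated]) simp
qed

lemma AE_cdf01: "is_cdf01 G \<Longrightarrow> AE w in interval_measure G. w \<in> {0..1}"
proof -
  assume G: "is_cdf01 G"
  interpret real_distribution "interval_measure G" by (rule real_distribution_cdf01[OF G])
  have "prob ({..1} - {..<0}) = prob {..1} - prob {..<0}"
    by (rule finite_measure_Diff) auto
  also have "\<dots> = 1"
    using is_cdf01_eq_1[OF G, of 1] measure_cdf01_Iic[OF G] measure_cdf01_Iio_0[OF G] by simp
  also have "{..1} - {..<0} = {0..1::real}"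
    by auto
  finally show ?thesis by (intro AE_prob_1)
qed

lemma expect_cong: "(\<And>w. w \<in> {0..1} \<Longrightarrow> f w = g w) \<Longrightarrow> expect G f = expect G g"
  unfolding expect_def by (rule set_lebesgue_integral_cong) auto

lemma expect_eq_integral:
  assumes G: "is_cdf01 G" and \<phi>: "\<phi> \<in> borel_measurable borel"
    and eq: "\<And>w. w \<in> {0..1} \<Longrightarrow> f w = \<phi> w"
  shows "expect G f = integral\<^sup>L (interval_measure G) \<phi>"
proof -
  have "expect G f = integral\<^sup>L (interval_measure G) (\<lambda>w. indicator {0..1} w * \<phi> w)"
    unfolding expect_def set_lebesgue_integral_def
    by (intro Bochner_Integration.integral_cong) (auto simp: indicator_def eq)
  also have "\<dots> = integral\<^sup>L (interval_measure G) \<phi>"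
  proof (rule integral_cong_AE)
    show "AE w in interval_measure G. indicator {0..1} w * \<phi> w = \<phi> w"
      using AE_cdf01[OF G] by eventually_elim simp
  qed (use \<phi> in \<open>simp_all add: measurable_cong_sets[OF sets_interval_measure refl]\<close>)
  finally show ?thesis .
qed

lemma
  assumes G: "is_cdf01 G" and f: "mono_on {0..1} f"
  shows expect_mono_eq_integral: "expect G f = integral\<^sup>L (interval_measure G) (extend01 f)"
    and integrable_extend01: "integrable (interval_measure G) (extend01 f)"
proof -
  interpret real_distribution "interval_measure G" by (rule real_distribution_cdf01[OF G])
  show "expect G f = integral\<^sup>L (interval_measure G) (extend01 f)"
    by (rule expect_eq_integral[OF G borel_measurable_extend01[OF f]]) simp
  show "integrable (interval_measure G) (extend01 f)"
  proof (rule integrable_const_bound)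
    show "AE x in interval_measure G. norm (extend01 f x) \<le> \<bar>f 0\<bar> + \<bar>f 1\<bar>"
    proof (rule AE_I2)
      fix x show "norm (extend01 f x) \<le> \<bar>f 0\<bar> + \<bar>f 1\<bar>"
        using extend01_bounds[OF f, of x] by (simp add: abs_le_iff abs_if)
    qed
  qed (use borel_measurable_extend01[OF f] in simp)
qed

lemma expect_diff:
  assumes G: "is_cdf01 G" and f: "mono_on {0..1} f" and g: "mono_on {0..1} g"
  shows "expect G (\<lambda>w. f w - g w) = expect G f - expect G g"
proof -
  have "expect G (\<lambda>w. f w - g w)
      = integral\<^sup>L (interval_measure G) (\<lambda>w. extend01 f w - extend01 g w)"
    using borel_measurable_extend01[OF f] borel_measurable_extend01[OF g]
    by (intro expect_eq_integral[OF G]) auto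
  then show ?thesis
    using integrable_extend01[OF G f] integrable_extend01[OF G g]
    by (simp add: expect_mono_eq_integral[OF G f] expect_mono_eq_integral[OF G g])
qed

lemma expect_const: "is_cdf01 G \<Longrightarrow> expect G (\<lambda>_. c) = c"
proof -
  assume G: "is_cdf01 G"
  interpret real_distribution "interval_measure G" by (rule real_distribution_cdf01[OF G])
  show ?thesis by (subst expect_eq_integral[OF G, of "\<lambda>_. c"]) (use prob_space in simp_all)
qed

lemma mono_on_indefinite_integral:
  fixes g :: "real \<Rightarrow> real"
  assumes "mono_on {0..1} g" and "\<And>s. s \<in> {0..1} \<Longrightarrow> 0 \<le> g s"
  shows "mono_on {0..1} (\<lambda>w. integral {0..w} g)"
proof (rule mono_onI)
  fix x y :: real assume "x \<in> {0..1}" "y \<in> {0..1}" "x \<le> y"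
  moreover have "g integrable_on {0..y}"
    using \<open>y \<in> {0..1}\<close> by (intro integrable_on_mono_on mono_on_subset[OF assms(1)]) auto
  ultimately show "integral {0..x} g \<le> integral {0..y} g"
    using assms(2) by (intro integral_subset_le integrable_on_subinterval) auto
qed

lemma integrable_mult_one_minus_cdf01:
  assumes G: "is_cdf01 G" and g: "mono_on {0..1} g" "\<And>s. s \<in> {0..1} \<Longrightarrow> 0 \<le> g s"
  shows "(\<lambda>s. g s * (1 - G s)) integrable_on {0..1}"
proof -
  have "mono_on {0..1} (\<lambda>s. g s * G s)"
    using g is_cdf01_bounds[OF G] by (intro mono_onI mult_mono) (auto intro: mono_onD is_cdf01_mono[OF G])
  then have "(\<lambda>s. g s - g s * G s) integrable_on {0..1}"
    by (intro integrable_diff integrable_on_mono_on g(1))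
  then show ?thesis by (simp add: algebra_simps)
qed

lemma emeasure_cdf01_Ioi: "is_cdf01 G \<Longrightarrow> emeasure (interval_measure G) {s<..} = 1 - G s"
proof -
  assume G: "is_cdf01 G"
  interpret real_distribution "interval_measure G" by (rule real_distribution_cdf01[OF G])
  have "prob (UNIV - {..s}) = 1 - prob {..s}"
    using prob_compl[of "{..s}"] by simp
  moreover have "UNIV - {..s} = {s<..}" by auto
  ultimately show ?thesis
    using measure_cdf01_Iic[OF G] by (simp add: emeasure_eq_measure)
qed

lemma nn_integral_cdf01_Ioi:
  assumes G: "is_cdf01 G" and "0 \<le> c"
  shows "(\<integral>\<^sup>+ w. (if 0 \<le> s \<and> s < w then ennreal c else 0) \<partial>interval_measure G)
       = ennreal (c * (1 - G s)) * indicator {0..1} s"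
proof (cases "0 \<le> s")
  case True
  have "(\<integral>\<^sup>+ w. (if 0 \<le> s \<and> s < w then ennreal c else 0) \<partial>interval_measure G)
      = (\<integral>\<^sup>+ w. ennreal c * indicator {s<..} w \<partial>interval_measure G)"
    using True by (intro nn_integral_cong) (simp add: indicator_def)
  also have "\<dots> = ennreal c * ennreal (1 - G s)"
    by (subst nn_integral_cmult_indicator) (simp_all add: emeasure_cdf01_Ioi[OF G])
  also have "\<dots> = ennreal (c * (1 - G s)) * indicator {0..1} s"
    using True \<open>0 \<le> c\<close> is_cdf01_bounds[OF G, of s] is_cdf01_eq_1[OF G, of s]
    by (auto simp: ennreal_mult indicator_def)
  finally show ?thesis .
qed simp

text \<open>Tonelli's theorem applied to the indicator of \<open>0 \<le> s < w\<close>.\<close>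

lemma nn_integral_cdf01_indefinite_integral:
  fixes h :: "real \<Rightarrow> real"
  assumes G: "is_cdf01 G" and h: "mono h" "\<And>s. 0 \<le> h s"
  shows "(\<integral>\<^sup>+ w. ennreal (integral {0..w} h) \<partial>interval_measure G)
       = ennreal (integral {0..1} (\<lambda>s. h s * (1 - G s)))"
proof -
  define M where "M = interval_measure G"
  interpret real_distribution M unfolding M_def by (rule real_distribution_cdf01[OF G])
  have [measurable]: "h \<in> borel_measurable borel"
    using h(1) by (rule borel_measurable_mono)
  have h_int: "h integrable_on {a..b}" for a b
    using h(1) by (intro integrable_on_mono_on) (simp add: mono_on_def monoD)
  define f where "f ws = (if 0 \<le> snd ws \<and> snd ws < fst ws then ennreal (h (snd ws)) else 0)" for ws
  have [measurable]: "f \<in> borel_measurable (M \<Otimes>\<^sub>M lborel)"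
    unfolding f_def M_def by measurable
  have inner_lborel: "(\<integral>\<^sup>+ s. f (w, s) \<partial>lborel) = ennreal (integral {0..w} h)" for w
  proof -
    have "(\<integral>\<^sup>+ s. f (w, s) \<partial>lborel) = (\<integral>\<^sup>+ s. ennreal (h s) * indicator {0..w} s \<partial>lborel)"
      using AE_lborel_singleton[of w] by (intro nn_integral_cong_AE) (auto simp: f_def indicator_def)
    also have "\<dots> = ennreal (integral {0..w} h)"
      using h(2) h_int by (intro nn_integral_has_integral_lebesgue' integrable_integral)
    finally show ?thesis .
  qed
  have inner_M: "(\<integral>\<^sup>+ w. f (w, s) \<partial>M) = ennreal (h s * (1 - G s)) * indicator {0..1} s" for s
  proof -
    have "(\<integral>\<^sup>+ w. f (w, s) \<partial>M) = (\<integral>\<^sup>+ w. (if 0 \<le> s \<and> s < w then ennreal (h s) else 0) \<partial>M)"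
      by (rule nn_integral_cong) (simp add: f_def)
    then show ?thesis
      using nn_integral_cdf01_Ioi[OF G h(2)] by (simp add: M_def)
  qed
  have "(\<integral>\<^sup>+ w. ennreal (integral {0..w} h) \<partial>M) = (\<integral>\<^sup>+ w. \<integral>\<^sup>+ s. f (w, s) \<partial>lborel \<partial>M)"
    by (simp only: inner_lborel)
  also have "\<dots> = (\<integral>\<^sup>+ s. \<integral>\<^sup>+ w. f (w, s) \<partial>M \<partial>lborel)"
    by (rule pair_sigma_finite.Fubini[symmetric])
      (auto intro: pair_sigma_finite.intro prob_space_imp_sigma_finite prob_space_axioms
        sigma_finite_lborel)
  also have "\<dots> = (\<integral>\<^sup>+ s. ennreal (h s * (1 - G s)) * indicator {0..1} s \<partial>lborel)"
    by (simp only: inner_M)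
  also have "\<dots> = ennreal (integral {0..1} (\<lambda>s. h s * (1 - G s)))"
    using h is_cdf01_bounds[OF G] mono_on_subset[OF h(1)]
    by (intro nn_integral_has_integral_lebesgue' integrable_integral integrable_mult_one_minus_cdf01[OF G])
      auto
  finally show ?thesis
    unfolding M_def .
qed

lemma expect_indefinite_integral:
  assumes G: "is_cdf01 G" and g: "mono_on {0..1} g" "\<And>s. s \<in> {0..1} \<Longrightarrow> 0 \<le> g s"
  shows "expect G (\<lambda>w. integral {0..w} g) = integral {0..1} (\<lambda>s. g s * (1 - G s))"
proof -
  define \<Phi> where "\<Phi> w = integral {0..w} g" for w
  define h where "h = extend01 g"
  have h_mono: "mono h"
    unfolding h_def by (rule mono_extend01[OF g(1)])
  have h_nonneg: "0 \<le> h s" for s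
    using extend01_bounds[OF g(1), of s] g(2)[of 0] unfolding h_def by simp
  have \<Phi>_mono: "mono_on {0..1} \<Phi>"
    unfolding \<Phi>_def by (rule mono_on_indefinite_integral[OF g])
  have \<Phi>_nonneg: "0 \<le> extend01 \<Phi> w" for w
    using extend01_bounds[OF \<Phi>_mono, of w] by (simp add: \<Phi>_def)
  have \<Phi>_eq: "\<Phi> w = integral {0..w} h" if "w \<in> {0..1}" for w
    using that by (auto simp: \<Phi>_def h_def intro: integral_cong)
  have "ennreal (expect G \<Phi>) = (\<integral>\<^sup>+ w. ennreal (extend01 \<Phi> w) \<partial>interval_measure G)"
    using integrable_extend01[OF G \<Phi>_mono] \<Phi>_nonneg
    by (simp add: expect_mono_eq_integral[OF G \<Phi>_mono] nn_integral_eq_integral)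
  also have "\<dots> = (\<integral>\<^sup>+ w. ennreal (integral {0..w} h) \<partial>interval_measure G)"
  proof (rule nn_integral_cong_AE)
    show "AE w in interval_measure G. ennreal (extend01 \<Phi> w) = ennreal (integral {0..w} h)"
      using AE_cdf01[OF G] by eventually_elim (simp add: \<Phi>_eq)
  qed
  also have "\<dots> = ennreal (integral {0..1} (\<lambda>s. h s * (1 - G s)))"
    by (rule nn_integral_cdf01_indefinite_integral[OF G h_mono h_nonneg])
  finally have "expect G \<Phi> = integral {0..1} (\<lambda>s. h s * (1 - G s))"
    using \<Phi>_nonneg h_nonneg is_cdf01_bounds[OF G]
    by (subst (asm) ennreal_inj)
      (auto simp: expect_mono_eq_integral[OF G \<Phi>_mono] Bochner_Integration.integral_nonneg
        intro!: integral_nonneg integrable_mult_one_minus_cdf01[OF G] h_nonneg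
          mono_on_subset[OF h_mono])
  also have "\<dots> = integral {0..1} (\<lambda>s. g s * (1 - G s))"
    unfolding h_def by (rule integral_cong) simp
  finally show ?thesis
    unfolding \<Phi>_def .
qed

definition cdf_gap :: "(real \<Rightarrow> real) \<Rightarrow> (real \<Rightarrow> real) \<Rightarrow> real \<Rightarrow> real" where
  "cdf_gap F G x = integral {0..x} (\<lambda>s. F s - G s)"

lemma
  assumes "G \<in> MPC F"
  shows MPC_cdf: "is_cdf01 G"
    and MPC_cdf_gap_nonneg: "x \<in> {0..1} \<Longrightarrow> 0 \<le> cdf_gap F G x"
    and MPC_cdf_gap_1: "cdf_gap F G 1 = 0"
  using assms by (simp_all add: MPC_def cdf_gap_def)

lemma self_in_MPC: "is_cdf01 F \<Longrightarrow> F \<in> MPC F"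
  by (simp add: MPC_def)

lemma cdf_gap_0 [simp]: "cdf_gap F G 0 = 0"
  by (simp add: cdf_gap_def)

lemma cdf_diff_integrable: "is_cdf01 F \<Longrightarrow> is_cdf01 G \<Longrightarrow> (\<lambda>s. F s - G s) integrable_on {a..b}"
  by (intro integrable_diff is_cdf01_integrable)

lemma cdf_gap_combine:
  assumes "is_cdf01 F" "is_cdf01 G" "0 \<le> x" "x \<le> y"
  shows "cdf_gap F G y = cdf_gap F G x + integral {x..y} (\<lambda>s. F s - G s)"
  unfolding cdf_gap_def
  using Henstock_Kurzweil_Integration.integral_combine[OF assms(3,4) cdf_diff_integrable[OF assms(1,2)]]
  by simp

lemma continuous_on_cdf_gap: "is_cdf01 F \<Longrightarrow> is_cdf01 G \<Longrightarrow> continuous_on {0..1} (cdf_gap F G)"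
  unfolding cdf_gap_def by (intro indefinite_integral_continuous_1 cdf_diff_integrable)

lemma has_integral_mono_mult_cdf_diff:
  assumes F: "is_cdf01 F" and G: "G \<in> MPC F" and q: "mono_on {0..1} q"
    and xy: "0 \<le> x" "x \<le> y" "y \<le> 1"
  obtains c where "c \<in> {x..y}" and "0 \<le> (q y - q x) * cdf_gap F G c"
    and "((\<lambda>s. q s * (F s - G s)) has_integral
          q y * cdf_gap F G y - q x * cdf_gap F G x - (q y - q x) * cdf_gap F G c) {x..y}"
proof -
  note G_cdf = MPC_cdf[OF G]
  obtain c where c: "c \<in> {x..y}" and int: "((\<lambda>s. q s * (F s - G s)) has_integral
      q x * integral {x..c} (\<lambda>s. F s - G s) + q y * integral {c..y} (\<lambda>s. F s - G s)) {x..y}"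
    by (rule second_mean_value_theorem_full[where g = q, OF cdf_diff_integrable[OF F G_cdf] xy(2)])
      (use xy in \<open>auto intro: mono_onD[OF q]\<close>)
  have "cdf_gap F G c = cdf_gap F G x + integral {x..c} (\<lambda>s. F s - G s)"
    "cdf_gap F G y = cdf_gap F G c + integral {c..y} (\<lambda>s. F s - G s)"
    using c xy by (auto intro: cdf_gap_combine[OF F G_cdf])
  moreover have "0 \<le> (q y - q x) * cdf_gap F G c"
    using c xy mono_onD[OF q, of x y] MPC_cdf_gap_nonneg[OF G, of c] by simp
  ultimately show ?thesis
    using c int by (intro that[of c]) (simp_all add: algebra_simps)
qed

text \<open>Split \<open>[0,1]\<close> at \<open>a\<close> and \<open>b\<close>: the boundary terms telescope to \<open>cdf_gap F G 1 - cdf_gap F G 0 = 0\<close>,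
  and the pieces over \<open>[0,a]\<close> and \<open>[b,1]\<close> only decrease the integral.\<close>

lemma integral_mono_mult_cdf_diff_le:
  assumes F: "is_cdf01 F" and G: "G \<in> MPC F" and q: "mono_on {0..1} q"
    and ab: "0 \<le> a" "a \<le> b" "b \<le> 1"
  obtains c where "c \<in> {a..b}"
    and "integral {0..1} (\<lambda>s. q s * (F s - G s)) \<le> - ((q b - q a) * cdf_gap F G c)"
proof -
  define I where "I = cdf_gap F G"
  obtain c1 where "0 \<le> (q a - q 0) * I c1"
    and int1: "((\<lambda>s. q s * (F s - G s)) has_integral q a * I a - q 0 * I 0 - (q a - q 0) * I c1) {0..a}"
    using has_integral_mono_mult_cdf_diff[OF F G q, of 0 a] ab unfolding I_def by auto
  obtain c where c: "c \<in> {a..b}"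
    and int2: "((\<lambda>s. q s * (F s - G s)) has_integral q b * I b - q a * I a - (q b - q a) * I c) {a..b}"
    using has_integral_mono_mult_cdf_diff[OF F G q, of a b] ab unfolding I_def by auto
  obtain c3 where "0 \<le> (q 1 - q b) * I c3"
    and int3: "((\<lambda>s. q s * (F s - G s)) has_integral q 1 * I 1 - q b * I b - (q 1 - q b) * I c3) {b..1}"
    using has_integral_mono_mult_cdf_diff[OF F G q, of b 1] ab unfolding I_def by auto
  have "integral {0..1} (\<lambda>s. q s * (F s - G s))
      = - ((q a - q 0) * I c1) - (q b - q a) * I c - (q 1 - q b) * I c3"
    using has_integral_combine[OF _ _ has_integral_combine[OF ab(1,2) int1 int2] int3] ab
      MPC_cdf_gap_1[OF G]
    unfolding I_def by (auto dest!: integral_unique simp: algebra_simps)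
  with \<open>0 \<le> (q a - q 0) * I c1\<close> \<open>0 \<le> (q 1 - q b) * I c3\<close> c that show ?thesis
    unfolding I_def by auto
qed

lemma integral_mono_mult_cdf_diff_nonpos:
  assumes "is_cdf01 F" "G \<in> MPC F" "mono_on {0..1} q"
  shows "integral {0..1} (\<lambda>s. q s * (F s - G s)) \<le> 0"
  by (rule integral_mono_mult_cdf_diff_le[OF assms, of 0 0]) auto

lemma cdf_gap_zero_if_integral_mono_mult_cdf_diff_eq_0:
  assumes "is_cdf01 F" "G \<in> MPC F" "mono_on {0..1} q"
    and "integral {0..1} (\<lambda>s. q s * (F s - G s)) = 0"
    and "0 \<le> a" "a < b" "b \<le> 1" "q a < q b"
  shows "\<exists>c\<in>{a..b}. cdf_gap F G c = 0"
proof -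
  obtain c where c: "c \<in> {a..b}" "0 \<le> - ((q b - q a) * cdf_gap F G c)"
    using integral_mono_mult_cdf_diff_le[OF assms(1-3), of a b] assms(4-7) by force
  moreover have "0 \<le> cdf_gap F G c"
    using MPC_cdf_gap_nonneg[OF assms(2)] assms(5,7) c(1) by auto
  ultimately show ?thesis
    using \<open>q a < q b\<close> by (intro bexI[of _ c]) (auto simp: mult_le_0_iff)
qed

text \<open>At a zero \<open>z\<close> of the gap the gap is minimal, so \<open>F - G\<close> has nonnegative integral to the right
  of \<open>z\<close> and nonpositive integral to the left; letting the interval shrink gives
  \<open>G(z) \<le> F(z) \<le> G(z-)\<close>.\<close>

lemma cdf_le_at_cdf_gap_zero:
  assumes F: "is_cdf01 F" "continuous_on {0..1} F" and G: "G \<in> MPC F"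
    and z: "z \<in> {0..1}" "cdf_gap F G z = 0"
  shows "G z \<le> F z"
proof (cases "z = 1")
  case True
  then show ?thesis using is_cdf01_eq_1[OF F(1)] is_cdf01_eq_1[OF MPC_cdf[OF G]] by simp
next
  case False
  note G_cdf = MPC_cdf[OF G]
  have "G z \<le> F x" if x: "z < x" "x \<le> 1" for x
  proof -
    have "0 \<le> integral {z..x} (\<lambda>s. F s - G s)"
      using cdf_gap_combine[OF F(1) G_cdf, of z x] MPC_cdf_gap_nonneg[OF G, of x] z x by simp
    also have "\<dots> \<le> integral {z..x} (\<lambda>_. F x - G z)"
    proof (rule integral_le[OF cdf_diff_integrable[OF F(1) G_cdf] integrable_const_ivl])
      fix s assume "s \<in> {z..x}"
      then show "F s - G s \<le> F x - G z"
        using is_cdf01_mono[OF F(1), of s x] is_cdf01_mono[OF G_cdf, of z s] by simp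
    qed
    also have "\<dots> = (x - z) * (F x - G z)"
      using x by simp
    finally show ?thesis
      using x by (simp add: zero_le_mult_iff)
  qed
  then have "\<forall>\<^sub>F x in at_right z. G z \<le> F x"
    using z False by (intro eventually_mono[OF eventually_at_right_real[of z 1]]) auto
  moreover have "(F \<longlongrightarrow> F z) (at z within {z..1})"
    using continuous_on_subset[OF F(2), of "{z..1}"] z by (simp add: continuous_on_def)
  then have "(F \<longlongrightarrow> F z) (at_right z)"
    using at_within_Icc_at_right[of z 1] z False by simp
  ultimately show ?thesis
    by (intro tendsto_lowerbound[of F "F z" "at_right z"]) simp_all
qed

lemma cdf_le_measure_Iio_below_cdf_gap_zero:
  assumes F: "is_cdf01 F" and G: "G \<in> MPC F" and z: "z \<in> {0..1}" "cdf_gap F G z = 0"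
    and x: "0 \<le> x" "x < z"
  shows "F x \<le> measure (interval_measure G) {..<z}"
proof -
  note G_cdf = MPC_cdf[OF G]
  interpret real_distribution "interval_measure G" by (rule real_distribution_cdf01[OF G_cdf])
  define m where "m = prob {..<z}"
  have le_m: "G s \<le> m" if "s < z" for s
  proof -
    have "prob {..s} \<le> m"
      unfolding m_def using that by (intro finite_measure_mono) auto
    then show ?thesis
      using measure_cdf01_Iic[OF G_cdf, of s] by simp
  qed
  have "(z - x) * (F x - m) = integral {x..z} (\<lambda>_. F x - m)"
    using x by simp
  also have "\<dots> \<le> integral {x..z} (\<lambda>s. F s - min (G s) m)"
  proof (rule integral_le[OF integrable_const_ivl])
    have "mono_on {x..z} (\<lambda>s. min (G s) m)"
      by (intro mono_onI min.mono is_cdf01_mono[OF G_cdf] order.refl)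
    then show "(\<lambda>s. F s - min (G s) m) integrable_on {x..z}"
      by (intro integrable_diff is_cdf01_integrable[OF F] integrable_on_mono_on)
    fix s assume "s \<in> {x..z}"
    then have "F x \<le> F s"
      by (intro is_cdf01_mono[OF F]) simp
    then show "F x - m \<le> F s - min (G s) m"
      using min.cobounded2[of "G s" m] by linarith
  qed
  also have "\<dots> = integral {x..z} (\<lambda>s. F s - G s)"
  proof (rule integral_spike[of "{z}"])
    fix s assume "s \<in> {x..z} - {z}"
    then show "F s - G s = F s - min (G s) m"
      using le_m[of s] by simp
  qed simp
  also have "\<dots> \<le> 0"
    using cdf_gap_combine[OF F G_cdf, of x z] MPC_cdf_gap_nonneg[OF G, of x] z x by simp
  finally show ?thesis
    using x unfolding m_def by (simp add: mult_le_0_iff)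
qed

lemma le_measure_Iio_at_cdf_gap_zero:
  assumes F: "is_cdf01 F" "continuous_on {0..1} F" "F 0 = 0" and G: "G \<in> MPC F"
    and z: "z \<in> {0..1}" "cdf_gap F G z = 0"
  shows "F z \<le> measure (interval_measure G) {..<z}"
proof (cases "z = 0")
  case True
  then show ?thesis using F(3) by simp
next
  case False
  then have "\<forall>\<^sub>F x in at_left z. F x \<le> measure (interval_measure G) {..<z}"
    using z cdf_le_measure_Iio_below_cdf_gap_zero[OF F(1) G z]
    by (intro eventually_mono[OF eventually_at_left_real[of 0 z]]) auto
  moreover have "(F \<longlongrightarrow> F z) (at z within {0..z})"
    using continuous_on_subset[OF F(2), of "{0..z}"] z by (simp add: continuous_on_def)
  then have "(F \<longlongrightarrow> F z) (at_left z)"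
    using at_within_Icc_at_left[of 0 z] z False by simp
  ultimately show ?thesis
    by (intro tendsto_upperbound[of F "F z" "at_left z"]) simp_all
qed

lemma
  assumes F: "is_cdf01 F" "continuous_on {0..1} F" "F 0 = 0" and G: "G \<in> MPC F"
    and z: "z \<in> {0..1}" "cdf_gap F G z = 0"
  shows measure_Iic_eq_if_cdf_gap_zero: "measure (interval_measure G) {..z} = F z"
    and measure_Iio_eq_if_cdf_gap_zero: "measure (interval_measure G) {..<z} = F z"
proof -
  interpret real_distribution "interval_measure G" by (rule real_distribution_cdf01[OF MPC_cdf[OF G]])
  have "prob {..<z} \<le> prob {..z}"
    by (rule finite_measure_mono) auto
  then show "prob {..z} = F z" "prob {..<z} = F z"
    using cdf_le_at_cdf_gap_zero[OF F(1,2) G z] le_measure_Iio_at_cdf_gap_zero[OF F G z]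
      measure_cdf01_Iic[OF MPC_cdf[OF G], of z] by linarith+
qed

lemma down_closed_eq_Iic_or_Iio:
  fixes S :: "real set"
  assumes down: "\<And>x y. y \<in> S \<Longrightarrow> x \<le> y \<Longrightarrow> x \<in> S" and "S \<noteq> {}" "bdd_above S"
  shows "S = {..Sup S} \<or> S = {..<Sup S}"
proof -
  have "x \<in> S" if "x < Sup S" for x
    using that less_cSup_iff[OF assms(2,3)] down by (auto intro: less_imp_le)
  moreover have "x \<le> Sup S" if "x \<in> S" for x
    using that cSup_upper[OF _ assms(3)] by blast
  ultimately show ?thesis
    by (cases "Sup S \<in> S") (auto intro: down simp: less_le)
qed

lemma cdf_gap_zero_if_strict_increase_across:
  assumes F: "is_cdf01 F" and G: "G \<in> MPC F" and z: "z \<in> {0..1}"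
    and gap_zero: "\<And>a b. 0 \<le> a \<Longrightarrow> a < b \<Longrightarrow> b \<le> 1 \<Longrightarrow> \<phi> a < \<phi> b \<Longrightarrow> \<exists>c\<in>{a..b}. cdf_gap F G c = 0"
    and across: "\<And>a b. 0 \<le> a \<Longrightarrow> a < z \<Longrightarrow> z < b \<Longrightarrow> b \<le> 1 \<Longrightarrow> \<phi> a < \<phi> b"
  shows "cdf_gap F G z = 0"
proof (rule ccontr)
  assume nonzero: "cdf_gap F G z \<noteq> 0"
  note G_cdf = MPC_cdf[OF G] and gap_nonneg = MPC_cdf_gap_nonneg[OF G]
    and gap_1 = MPC_cdf_gap_1[OF G]
  have pos: "0 < cdf_gap F G z" and "0 < z" "z < 1"
    using nonzero gap_nonneg[OF z] gap_1 z by (auto simp: less_le)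
  obtain d where "d > 0"
    and near: "\<And>x. x \<in> {0..1} \<Longrightarrow> dist x z < d \<Longrightarrow> dist (cdf_gap F G x) (cdf_gap F G z) < cdf_gap F G z"
    using continuous_on_iff[THEN iffD1, OF continuous_on_cdf_gap[OF F G_cdf], rule_format, OF z pos]
    by blast
  define a where "a = max 0 (z - d / 2)"
  define b where "b = min 1 (z + d / 2)"
  have ab: "0 \<le> a" "a < z" "z < b" "b \<le> 1"
    using \<open>0 < z\<close> \<open>z < 1\<close> \<open>d > 0\<close> unfolding a_def b_def by auto
  then obtain c where c: "c \<in> {a..b}" "cdf_gap F G c = 0"
    using gap_zero[of a b] across[of a b] by auto
  then have "c \<in> {0..1}" "dist c z < d"
    using ab \<open>d > 0\<close> unfolding a_def b_def by (auto simp: dist_real_def)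
  from near[OF this] c(2) show False
    by (simp add: dist_real_def)
qed

lemma sublevel_extend01_cases:
  assumes \<phi>: "mono_on {0..1} \<phi>" and y: "\<phi> 0 \<le> y" "y < \<phi> 1"
  obtains z where "z \<in> {0..1}"
    and "{w. extend01 \<phi> w \<le> y} = {..z} \<or> {w. extend01 \<phi> w \<le> y} = {..<z}"
    and "\<And>a b. 0 \<le> a \<Longrightarrow> a < z \<Longrightarrow> z < b \<Longrightarrow> b \<le> 1 \<Longrightarrow> \<phi> a < \<phi> b"
proof -
  define S where "S = {w. extend01 \<phi> w \<le> y}"
  have down: "x \<in> S" if "v \<in> S" "x \<le> v" for x v
    using that monoD[OF mono_extend01[OF \<phi>]] unfolding S_def by (auto intro: order_trans)
  have "0 \<in> S"
    using y unfolding S_def by simp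
  have below_1: "x < 1" if "x \<in> S" for x
  proof (rule ccontr)
    assume "\<not> x < 1"
    then have "1 \<in> S" using down[OF that] by simp
    with y show False unfolding S_def by simp
  qed
  then have "bdd_above S"
    by (intro bdd_aboveI[of _ 1]) (auto intro: less_imp_le)
  define z where "z = Sup S"
  have z: "z \<in> {0..1}"
    using cSup_upper[OF \<open>0 \<in> S\<close> \<open>bdd_above S\<close>] cSup_least[of S 1] \<open>0 \<in> S\<close> below_1
    unfolding z_def by (auto intro: less_imp_le)
  have S_cases: "S = {..z} \<or> S = {..<z}"
    unfolding z_def using down \<open>0 \<in> S\<close> \<open>bdd_above S\<close> by (intro down_closed_eq_Iic_or_Iio) auto
  have "\<phi> a < \<phi> b" if ab: "0 \<le> a" "a < z" "z < b" "b \<le> 1" for a b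
  proof -
    have "a \<in> S" "b \<notin> S"
      using S_cases ab by auto
    then show ?thesis
      using ab z unfolding S_def by auto
  qed
  with z S_cases show ?thesis
    unfolding S_def by (intro that) auto
qed

lemma measure_sublevel_eq_if_increases_at_cdf_gap_zeros:
  assumes F: "is_cdf01 F" "continuous_on {0..1} F" "F 0 = 0" and G: "G \<in> MPC F"
    and \<phi>: "mono_on {0..1} \<phi>"
    and gap_zero: "\<And>a b. 0 \<le> a \<Longrightarrow> a < b \<Longrightarrow> b \<le> 1 \<Longrightarrow> \<phi> a < \<phi> b \<Longrightarrow> \<exists>c\<in>{a..b}. cdf_gap F G c = 0"
  shows "measure (interval_measure G) {w. extend01 \<phi> w \<le> y}
       = measure (interval_measure F) {w. extend01 \<phi> w \<le> y}"
proof -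
  interpret G: real_distribution "interval_measure G" by (rule real_distribution_cdf01[OF MPC_cdf[OF G]])
  interpret F: real_distribution "interval_measure F" by (rule real_distribution_cdf01[OF F(1)])
  consider "y < \<phi> 0" | "\<phi> 1 \<le> y" | "\<phi> 0 \<le> y" "y < \<phi> 1"
    by linarith
  then show ?thesis
  proof cases
    case 1
    then have "{w. extend01 \<phi> w \<le> y} = {}"
      using extend01_bounds[OF \<phi>] by (auto simp: not_le intro: less_le_trans)
    then show ?thesis by simp
  next
    case 2
    then have "{w. extend01 \<phi> w \<le> y} = UNIV"
      using extend01_bounds[OF \<phi>] by (auto intro: order_trans)
    then show ?thesis
      using F.prob_space G.prob_space by simp
  next
    case 3
    show ?thesis
    proof (rule sublevel_extend01_cases[OF \<phi> 3])
      fix z assume z: "z \<in> {0..1}"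
        and S_cases: "{w. extend01 \<phi> w \<le> y} = {..z} \<or> {w. extend01 \<phi> w \<le> y} = {..<z}"
        and across: "\<And>a b. 0 \<le> a \<Longrightarrow> a < z \<Longrightarrow> z < b \<Longrightarrow> b \<le> 1 \<Longrightarrow> \<phi> a < \<phi> b"
      have "measure (interval_measure H) {w. extend01 \<phi> w \<le> y} = F z"
        if "H \<in> MPC F" "cdf_gap F H z = 0" for H
        using S_cases measure_Iic_eq_if_cdf_gap_zero[OF F that(1) z that(2)]
          measure_Iio_eq_if_cdf_gap_zero[OF F that(1) z that(2)] by (elim disjE) simp_all
      moreover have "cdf_gap F G z = 0"
        by (rule cdf_gap_zero_if_strict_increase_across[OF F(1) G z gap_zero across])
      moreover have "cdf_gap F F z = 0"
        by (simp add: cdf_gap_def)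
      ultimately show ?thesis
        using G self_in_MPC[OF F(1)] by simp
    qed
  qed
qed

lemma integral_eq_if_sublevel_measures_eq:
  fixes \<phi> :: "real \<Rightarrow> real"
  assumes M: "real_distribution M" and N: "real_distribution N" and \<phi>: "\<phi> \<in> borel_measurable borel"
    and eq: "\<And>y. measure M {w. \<phi> w \<le> y} = measure N {w. \<phi> w \<le> y}"
  shows "integral\<^sup>L M \<phi> = integral\<^sup>L N \<phi>"
proof -
  interpret M: real_distribution M by (fact M)
  interpret N: real_distribution N by (fact N)
  have \<phi>_M: "\<phi> \<in> borel_measurable M" and \<phi>_N: "\<phi> \<in> borel_measurable N"
    using \<phi> by simp_all
  have cdf_distr: "cdf (distr K borel \<phi>) y = measure K {w. \<phi> w \<le> y}"
    if "real_distribution K" "\<phi> \<in> borel_measurable K" for K y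
  proof -
    interpret K: real_distribution K by (fact that(1))
    show ?thesis
      unfolding cdf_def2 using that(2) by (subst measure_distr) (auto simp: vimage_def)
  qed
  have "cdf (distr M borel \<phi>) = cdf (distr N borel \<phi>)"
    using cdf_distr[OF M \<phi>_M] cdf_distr[OF N \<phi>_N] eq by auto
  then have "distr M borel \<phi> = distr N borel \<phi>"
    using \<phi>_M \<phi>_N by (intro cdf_unique) auto
  then show ?thesis
    using integral_distr[OF \<phi>_M, of "\<lambda>x. x"] integral_distr[OF \<phi>_N, of "\<lambda>x. x"] by simp
qed

lemma expect_eq_if_increases_at_cdf_gap_zeros:
  assumes F: "is_cdf01 F" "continuous_on {0..1} F" "F 0 = 0" and G: "G \<in> MPC F"
    and \<phi>: "mono_on {0..1} \<phi>"
    and gap_zero: "\<And>a b. 0 \<le> a \<Longrightarrow> a < b \<Longrightarrow> b \<le> 1 \<Longrightarrow> \<phi> a < \<phi> b \<Longrightarrow> \<exists>c\<in>{a..b}. cdf_gap F G c = 0"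
  shows "expect G \<phi> = expect F \<phi>"
proof -
  note G_cdf = MPC_cdf[OF G]
  show ?thesis
    unfolding expect_mono_eq_integral[OF G_cdf \<phi>] expect_mono_eq_integral[OF F(1) \<phi>]
    by (rule integral_eq_if_sublevel_measures_eq real_distribution_cdf01 G_cdf F(1)
        borel_measurable_extend01[OF \<phi>] measure_sublevel_eq_if_increases_at_cdf_gap_zeros[OF F G \<phi> gap_zero])+
qed

locale ic_mechanism =
  fixes qbar :: real and q t :: "real \<Rightarrow> real"
  assumes mechanism: "mechanism qbar q t" and IC: "B_IC q t" and IR: "B_IR q t"
begin

abbreviation utility :: "real \<Rightarrow> real" where
  "utility w \<equiv> w * q w - t w"

lemma utility_increment:
  assumes "x \<in> {0..1}" "y \<in> {0..1}"
  shows "q x * (y - x) \<le> utility y - utility x" and "utility y - utility x \<le> q y * (y - x)"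
  using IC assms unfolding B_IC_def by (fastforce simp: algebra_simps)+

lemma q_nonneg: "w \<in> {0..1} \<Longrightarrow> 0 \<le> q w"
  using mechanism unfolding mechanism_def by blast

lemma q_mono: "mono_on {0..1} q"
proof (rule mono_onI)
  fix x y :: real assume xy: "x \<in> {0..1}" "y \<in> {0..1}" "x \<le> y"
  then have "0 \<le> (q y - q x) * (y - x)"
    using utility_increment[OF xy(1,2)] by (simp add: algebra_simps)
  with xy show "q x \<le> q y"
    by (cases "x = y") (auto simp: zero_le_mult_iff)
qed

lemma t_mono: "mono_on {0..1} t"
proof (rule mono_onI)
  fix x y :: real assume xy: "x \<in> {0..1}" "y \<in> {0..1}" "x \<le> y"
  have "x * (q y - q x) \<le> t y - t x"
    using IC xy unfolding B_IC_def by (force simp: algebra_simps)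
  moreover have "0 \<le> x * (q y - q x)"
    using xy mono_onD[OF q_mono xy] by simp
  ultimately show "t x \<le> t y" by simp
qed

lemma t_eq_if_q_eq: "x \<in> {0..1} \<Longrightarrow> y \<in> {0..1} \<Longrightarrow> q x = q y \<Longrightarrow> t x = t y"
  using IC unfolding B_IC_def by (smt (verit))

lemma envelope_formula:
  assumes "w \<in> {0..1}"
  shows "utility w = - t 0 + integral {0..w} q"
proof -
  define V where "V x = utility x - integral {0..x} q" for x
  have "V w = V 0"
  proof (rule eq_if_increments_dominated[where V = V and g = q and a = 0 and b = w])
    show "mono_on {0..w} q"
      using assms by (auto intro: mono_on_subset[OF q_mono])
    fix x y assume xy: "0 \<le> x" "x \<le> y" "y \<le> w"
    then have xy01: "x \<in> {0..1}" "y \<in> {0..1}" using assms by auto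
    have q_int: "q integrable_on {a..b}" if "0 \<le> a" "b \<le> 1" for a b
      by (rule integrable_on_mono_on, rule mono_on_subset[OF q_mono]) (use that in auto)
    have "integral {0..y} q = integral {0..x} q + integral {x..y} q"
      using Henstock_Kurzweil_Integration.integral_combine[OF xy(1,2) q_int] xy01 by simp
    moreover have "q x \<le> q s" "q s \<le> q y" if "s \<in> {x..y}" for s
      using that xy01 by (auto intro!: mono_onD[OF q_mono])
    then have "q x * (y - x) \<le> integral {x..y} q" "integral {x..y} q \<le> q y * (y - x)"
      using integral_le[OF integrable_const_ivl q_int, of x y "q x"]
        integral_le[OF q_int integrable_const_ivl, of x y "q y"] xy xy01
      by (simp_all add: mult.commute)
    ultimately show "\<bar>V y - V x\<bar> \<le> (q y - q x) * (y - x)"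
      using utility_increment[OF xy01] unfolding V_def by (simp add: abs_le_iff algebra_simps)
  qed (use assms in auto)
  then show ?thesis unfolding V_def by simp
qed

lemma expect_utility:
  assumes G: "is_cdf01 G"
  shows "expect G utility = integral {0..1} (\<lambda>s. q s * (1 - G s)) - t 0"
proof -
  have "expect G utility = expect G (\<lambda>w. integral {0..w} q - t 0)"
    by (rule expect_cong) (simp add: envelope_formula)
  also have "\<dots> = expect G (\<lambda>w. integral {0..w} q) - expect G (\<lambda>_. t 0)"
    by (rule expect_diff[OF G mono_on_indefinite_integral[OF q_mono q_nonneg]])
      (auto intro: mono_onI)
  also have "expect G (\<lambda>w. integral {0..w} q) = integral {0..1} (\<lambda>s. q s * (1 - G s))"
    by (rule expect_indefinite_integral[OF G q_mono q_nonneg])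
  also have "expect G (\<lambda>_. t 0) = t 0"
    by (rule expect_const[OF G])
  finally show ?thesis .
qed

lemma expect_utility_diff:
  assumes F: "is_cdf01 F" and H: "is_cdf01 H"
  shows "expect H utility - expect F utility = integral {0..1} (\<lambda>s. q s * (F s - H s))"
proof -
  have "integral {0..1} (\<lambda>s. q s * (1 - H s)) - integral {0..1} (\<lambda>s. q s * (1 - F s))
      = integral {0..1} (\<lambda>s. q s * (1 - H s) - q s * (1 - F s))"
    using integrable_mult_one_minus_cdf01[OF F q_mono q_nonneg]
      integrable_mult_one_minus_cdf01[OF H q_mono q_nonneg]
    by (rule integral_diff[symmetric, rotated])
  then show ?thesis
    by (simp add: expect_utility F H algebra_simps)
qed

lemma expect_utility_le_if_MPC:
  assumes "is_cdf01 F" "H \<in> MPC F"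
  shows "expect H utility \<le> expect F utility"
  using expect_utility_diff[OF assms(1) MPC_cdf[OF assms(2)]]
    integral_mono_mult_cdf_diff_nonpos[OF assms q_mono] by simp

lemma I_OB_full_revelation: "is_cdf01 F \<Longrightarrow> I_OB F 0 q t F"
  unfolding I_OB_def using expect_utility_le_if_MPC by (simp add: self_in_MPC)

lemma expect_profit_eq_if_expect_utility_eq:
  assumes F: "is_cdf01 F" "continuous_on {0..1} F" "F 0 = 0" and G: "G \<in> MPC F"
    and c: "mono_on {0..} c" and utility_eq: "expect G utility = expect F utility"
  shows "expect G (\<lambda>w. t w - c (q w)) = expect F (\<lambda>w. t w - c (q w))"
proof -
  have "integral {0..1} (\<lambda>s. q s * (F s - G s)) = 0"
    using expect_utility_diff[OF F(1) MPC_cdf[OF G]] utility_eq by simp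
  note gap_zero = cdf_gap_zero_if_integral_mono_mult_cdf_diff_eq_0[OF F(1) G q_mono this]
  have cq_mono: "mono_on {0..1} (\<lambda>w. c (q w))"
    using q_nonneg by (intro mono_onI mono_onD[OF c] mono_onD[OF q_mono]) auto
  have "expect G t = expect F t"
  proof (rule expect_eq_if_increases_at_cdf_gap_zeros[OF F G t_mono])
    fix a b assume ab: "0 \<le> a" "a < b" "b \<le> 1" "t a < t b"
    then have "q a < q b"
      using mono_onD[OF q_mono, of a b] t_eq_if_q_eq[of a b] by force
    with ab show "\<exists>x\<in>{a..b}. cdf_gap F G x = 0"
      by (intro gap_zero) auto
  qed
  moreover have "expect G (\<lambda>w. c (q w)) = expect F (\<lambda>w. c (q w))"
  proof (rule expect_eq_if_increases_at_cdf_gap_zeros[OF F G cq_mono])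
    fix a b assume ab: "0 \<le> a" "a < b" "b \<le> 1" "c (q a) < c (q b)"
    then have "q a \<le> q b" "q a \<noteq> q b"
      by (auto intro: mono_onD[OF q_mono])
    then have "q a < q b"
      by simp
    with ab show "\<exists>x\<in>{a..b}. cdf_gap F G x = 0"
      by (intro gap_zero) auto
  qed
  ultimately show ?thesis
    by (simp add: expect_diff[OF MPC_cdf[OF G] t_mono cq_mono] expect_diff[OF F(1) t_mono cq_mono])
qed


lemma expect_profit_eq_if_I_OB:
  assumes F: "is_cdf01 F" "continuous_on {0..1} F" "F 0 = 0" and obedient: "I_OB F 0 q t G"
    and c: "mono_on {0..} c"
  shows "expect G (\<lambda>w. t w - c (q w)) = expect F (\<lambda>w. t w - c (q w))"
proof -
  have G: "G \<in> MPC F"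
    using obedient unfolding I_OB_def by blast
  have "expect F utility \<le> expect G utility"
    using obedient self_in_MPC[OF F(1)] unfolding I_OB_def by simp
  then show ?thesis
    using expect_utility_le_if_MPC[OF F(1) G]
    by (intro expect_profit_eq_if_expect_utility_eq[OF F G c]) simp
qed
end

theorem proposition2:
  fixes F0 f0 c :: "real \<Rightarrow> real" and qbar :: real and qMR tMR :: "real \<Rightarrow> real"
  assumes qbar_pos: "qbar > 0"
    and F0_cdf: "is_cdf01 F0"
    and f0_int: "f0 integrable_on {0..1}"
    and F0_density: "\<forall>x\<in>{0..1}. F0 x = integral {0..x} f0"
    and f0_pos: "\<forall>x\<in>{0..1}. f0 x > 0"
    and IHR: "mono_on {0..<1} (\<lambda>x. f0 x / (1 - F0 x))"
    and c_nonneg: "\<forall>x\<ge>0. c x \<ge> 0"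
    and c_incr: "strict_mono_on {0..} c"
    and c_C1: "\<exists>c'. (\<forall>x\<ge>0. (c has_real_derivative c' x) (at x within {0..}))
                    \<and> continuous_on {0..} c'"
    and c_convex: "strictly_convex_on {0..} c"
    and MR: "mussa_rosen F0 c qbar qMR tMR"
  shows "monopolist_solution F0 c 0 qbar qMR tMR F0"
proof -
  \<comment> \<open>Besides \<open>F0_cdf\<close> and \<open>MR\<close>, only continuity of \<open>F0\<close>, \<open>F0 0 = 0\<close> and monotonicity of \<open>c\<close>
    are used; the remaining hypotheses are what makes the Mussa--Rosen mechanism exist.\<close>
  have F0_cont: "continuous_on {0..1} F0"
    by (rule continuous_on_eq[OF indefinite_integral_continuous_1[OF f0_int]]) (simp add: F0_density)
  have F0_0: "F0 0 = 0"
    using F0_density by simp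
  have c_mono: "mono_on {0..} c"
    using c_incr by (rule strict_mono_on_imp_mono_on)
  interpret MR: ic_mechanism qbar qMR tMR
    using MR unfolding mussa_rosen_def ic_mechanism_def by blast
  have MR_feasible: "monopolist_feasible F0 0 qbar qMR tMR F0"
    unfolding monopolist_feasible_def
    using MR.mechanism MR.IC MR.IR self_in_MPC[OF F0_cdf] MR.I_OB_full_revelation[OF F0_cdf] by blast
  have "expect G (\<lambda>w. t w - c (q w)) \<le> expect F0 (\<lambda>w. tMR w - c (qMR w))"
    if feasible: "monopolist_feasible F0 0 qbar q t G" for q t G
  proof -
    interpret ic_mechanism qbar q t
      using feasible unfolding monopolist_feasible_def ic_mechanism_def by blast
    have "expect G (\<lambda>w. t w - c (q w)) = expect F0 (\<lambda>w. t w - c (q w))"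
      using feasible unfolding monopolist_feasible_def
      by (intro expect_profit_eq_if_I_OB[OF F0_cdf F0_cont F0_0 _ c_mono]) blast
    also have "\<dots> \<le> expect F0 (\<lambda>w. tMR w - c (qMR w))"
      using MR feasible unfolding mussa_rosen_def monopolist_feasible_def by blast
    finally show ?thesis .
  qed
  with MR_feasible show ?thesis
    unfolding monopolist_solution_def by blast
qed

end
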